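(* There exist rings $R\supseteq S$ (with the same $1$) and a central idempotent $e$ of $R$ such that $R=Se+S(1-e)$, $S$ is finitely presented as a ring, but $R$ is not finitely presented as a ring.
   Context: A ring is finitely presented if it is isomorphic to $F/I$ where $F$ is a free ring (free $\mathbb{Z}$-algebra with $1$) on finitely many generators and $I$ is a two-sided ideal of $F$ generated by finitely many elements. *)

theory Defs
  imports "HOL-Algebra.QuotRing" "HOL-Algebra.Subrings"
begin

text \<open>The free ring (free Z-algebra with 1) on n generators x_0,...,x_{n-1}:
  the monoid ring Z<x_0,...,x_{n-1}> of the free monoid, realised as finitely
  supported integer-valued functions on words (lists over {..<n}),
  with pointwise addition and convolution (concatenation) product.\<close>

definition free_ring :: "nat \<Rightarrow> (nat list \<Rightarrow> int) ring" where
  "free_ring n =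
    \<lparr> carrier = {f. finite {w. f w \<noteq> 0} \<and> (\<forall>w. f w \<noteq> 0 \<longrightarrow> set w \<subseteq> {..<n})},
      mult = (\<lambda>f g w. \<Sum>i\<le>length w. f (take i w) * g (drop i w)),
      one = (\<lambda>w. if w = [] then 1 else 0),
      zero = (\<lambda>w. 0),
      add = (\<lambda>f g w. f w + g w) \<rparr>"

definition finitely_presented :: "('a, 'b) ring_scheme \<Rightarrow> bool" where
  "finitely_presented R \<longleftrightarrow>
     (\<exists>n G. finite G \<and> G \<subseteq> carrier (free_ring n) \<and>
        R \<simeq> (free_ring n Quot genideal (free_ring n) G))"

end

(* Let F = Z<x0, x1, x2> (words over the letters 0, 1, 2), let A = F/I_A, where I_A is generated by
   the words x0 x2, x2 x0, x1 x2, x2 x1 and x0 x1^j x0 for all j, let B = F/(x2), and let S be the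
   image of the diagonal map F -> A \<times> B.  Both projections of S are onto, so R = A \<times> B equals
   S e + S (1 - e) for e = (1, 0).

   All ideals involved are spanned by words, and a word lying in both I_A and (x2) contains x2 next
   to another letter; hence S = F/(I_A \<inter> (x2)) is presented by the four words x0 x2, x2 x0, x1 x2,
   x2 x1.  If R were finitely presented, so would be its quotient A = R/(1 - e)R.  But finite
   presentability does not depend on the presentation: lifting two presentations of the same ring
   against each other shows that the kernel of every surjection from a finitely generated free ring is
   finitely generated.  The kernel I_A of F -> A is the union of the strictly increasing chain of ideals
   generated by the relators with j < k, so it is not. *)

theory Submission
  imports Defs "HOL-Algebra.Chinese_Remainder" "HOL-Algebra.Weak_Morphisms" "HOL-Library.Countable_Set"
begin

lemma finite_subset_mono_Union:
  fixes K :: "nat \<Rightarrow> 'a set"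
  assumes "mono K" "finite D" "D \<subseteq> (\<Union>k. K k)"
  obtains k where "D \<subseteq> K k"
proof -
  have "subset.chain UNIV (range K)"
    using assms(1) unfolding subset.chain_def by (auto intro: nat_le_linear[THEN disjE] dest: monoD)
  then show thesis
    using finite_subset_Union_chain[of D "range K" UNIV] assms(2,3) that by blast
qed

lemma image_setcompr2:
  assumes "\<And>s t. s \<in> S \<Longrightarrow> t \<in> S \<Longrightarrow> h (F s t) = G (h s) (h t)"
  shows "h ` {F s t | s t. s \<in> S \<and> t \<in> S} = {G s t | s t. s \<in> h ` S \<and> t \<in> h ` S}"
  using assms by (auto simp: image_iff) metis

lemma a_kernel_comp_inj:
  assumes "ring S" "ring T" "g \<in> ring_hom S T" "inj_on g (carrier S)" "h \<in> ring_hom R S"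
  shows "a_kernel R T (g \<circ> h) = a_kernel R S h"
proof -
  have "g (h x) = \<zero>\<^bsub>T\<^esub> \<longleftrightarrow> h x = \<zero>\<^bsub>S\<^esub>" if "x \<in> carrier R" for x
    using inj_on_eq_iff[OF assms(4) ring_hom_closed[OF assms(5) that] ring.ring_simprules(2)[OF assms(1)]]
    by (simp add: ring_hom_zero[OF assms(3,1,2)])
  then show ?thesis by (auto simp: a_kernel_def')
qed

lemma (in ideal) a_kernel_rcos_ring_hom: "a_kernel R (R Quot I) ((+>) I) = I"
proof -
  have "a_kernel R (R Quot I) ((+>) I) = {x \<in> carrier R. I +> x = I}"
    by (simp add: a_kernel_def' FactRing_def)
  also have "\<dots> = {x \<in> carrier R. x \<in> I}"
    by (rule Collect_cong) (use rcos_const_imp_mem a_rcos_zero[OF is_ideal] in blast)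
  also have "\<dots> = I"
    using Icarr by blast
  finally show ?thesis .
qed

lemma (in ideal) rcos_ring_hom_surj: "(+>) I ` carrier R = carrier (R Quot I)"
  unfolding FactRing_def A_RCOSETS_def' by auto

lemma hom_genideal_subset:
  assumes "ring R" "ring S" "h \<in> ring_hom R S" "G \<subseteq> carrier R" "ideal J S" "h ` G \<subseteq> J"
  shows "h ` genideal R G \<subseteq> J"
proof -
  interpret h: ring_hom_ring R S h by (intro ring_hom_ringI2 assms)
  have "genideal R G \<subseteq> {r \<in> carrier R. h r \<in> J}"
    using assms(4,6) by (intro h.R.genideal_minimal h.ideal_vimage[OF assms(5)]) auto
  then show ?thesis by auto
qed

lemma (in ideal) mem_of_minus_mem:
  assumes "a \<ominus> b \<in> I" "b \<in> I" "a \<in> carrier R" "b \<in> carrier R"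
  shows "a \<in> I"
proof -
  have "(a \<ominus> b) \<oplus> b \<in> I"
    using assms(1,2) by (rule additive_subgroup.a_closed[OF additive_subgroup_axioms])
  moreover have "(a \<ominus> b) \<oplus> b = a"
    using assms(3,4) by (simp add: a_minus_def add.m_assoc l_neg)
  ultimately show ?thesis by simp
qed

lemma (in ring_hom_ring) minus_mem_kernel:
  assumes "x \<in> carrier R" "y \<in> carrier R" "h x = h y"
  shows "x \<ominus> y \<in> a_kernel R S h"
proof -
  have "h (x \<ominus> y) = h (x \<oplus> \<ominus> y)"
    by (simp only: a_minus_def)
  also have "\<dots> = h x \<oplus>\<^bsub>S\<^esub> h (\<ominus> y)"
    by (rule hom_add[OF assms(1) R.a_inv_closed[OF assms(2)]])
  also have "\<dots> = h x \<oplus>\<^bsub>S\<^esub> \<ominus>\<^bsub>S\<^esub> h y"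
    by (simp only: hom_a_inv[OF assms(2)])
  also have "\<dots> = \<zero>\<^bsub>S\<^esub>"
    unfolding assms(3) by (rule S.r_neg[OF hom_closed[OF assms(2)]])
  finally have "h (x \<ominus> y) = \<zero>\<^bsub>S\<^esub>" .
  moreover have "x \<ominus> y \<in> carrier R"
    using assms(1,2) by (rule R.minus_closed)
  ultimately show ?thesis
    unfolding a_kernel_def' by blast
qed

lemma RDirProd_simps:
  "(a, b) \<otimes>\<^bsub>RDirProd A B\<^esub> (c, d) = (a \<otimes>\<^bsub>A\<^esub> c, b \<otimes>\<^bsub>B\<^esub> d)"
  "(a, b) \<oplus>\<^bsub>RDirProd A B\<^esub> (c, d) = (a \<oplus>\<^bsub>A\<^esub> c, b \<oplus>\<^bsub>B\<^esub> d)"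
  "\<one>\<^bsub>RDirProd A B\<^esub> = (\<one>\<^bsub>A\<^esub>, \<one>\<^bsub>B\<^esub>)"
  "\<zero>\<^bsub>RDirProd A B\<^esub> = (\<zero>\<^bsub>A\<^esub>, \<zero>\<^bsub>B\<^esub>)"
  by (simp_all add: RDirProd_def DirProd_def monoid.defs)

lemma RDirProd_a_minus:
  assumes "ring A" "ring B" "a \<in> carrier A" "b \<in> carrier B" "c \<in> carrier A" "d \<in> carrier B"
  shows "(a, b) \<ominus>\<^bsub>RDirProd A B\<^esub> (c, d) = (a \<ominus>\<^bsub>A\<^esub> c, b \<ominus>\<^bsub>B\<^esub> d)"
proof -
  interpret A: ring A by fact
  interpret B: ring B by fact
  interpret P: ring "RDirProd A B" by (rule RDirProd_ring[OF assms(1,2)])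
  have "\<ominus>\<^bsub>RDirProd A B\<^esub> (c, d) = (\<ominus>\<^bsub>A\<^esub> c, \<ominus>\<^bsub>B\<^esub> d)"
    using assms(5,6) by (intro P.minus_equality) (simp_all add: RDirProd_simps RDirProd_carrier A.l_neg B.l_neg)
  then show ?thesis
    by (simp add: a_minus_def RDirProd_simps)
qed

lemma fst_ring_hom_RDirProd: "fst \<in> ring_hom (RDirProd A B) A"
  by (auto simp: ring_hom_def RDirProd_def DirProd_def monoid.defs)

section \<open>The free ring\<close>

definition conv :: "(nat list \<Rightarrow> int) \<Rightarrow> (nat list \<Rightarrow> int) \<Rightarrow> nat list \<Rightarrow> int" where
  "conv f g = (\<lambda>w. \<Sum>i\<le>length w. f (take i w) * g (drop i w))"

definition monomial :: "nat list \<Rightarrow> nat list \<Rightarrow> int" where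
  "monomial u = (\<lambda>v. if v = u then 1 else 0)"

abbreviation var :: "nat \<Rightarrow> nat list \<Rightarrow> int" where
  "var i \<equiv> monomial [i]"

lemma carrier_free_ring_iff:
  "f \<in> carrier (free_ring n) \<longleftrightarrow> finite {w. f w \<noteq> 0} \<and> (\<forall>w. f w \<noteq> 0 \<longrightarrow> set w \<subseteq> {..<n})"
  by (simp add: free_ring_def)

lemma free_ring_simps:
  "x \<otimes>\<^bsub>free_ring n\<^esub> y = conv x y"
  "x \<oplus>\<^bsub>free_ring n\<^esub> y = (\<lambda>w. x w + y w)"
  "\<one>\<^bsub>free_ring n\<^esub> = monomial []"
  "\<zero>\<^bsub>free_ring n\<^esub> = (\<lambda>w. 0)"
  by (simp_all add: free_ring_def conv_def monomial_def fun_eq_iff)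

lemma sum_triangle_swap:
  fixes F :: "nat \<Rightarrow> nat \<Rightarrow> int"
  shows "(\<Sum>i\<le>L. \<Sum>j\<le>i. F j i) = (\<Sum>j\<le>L. \<Sum>k\<le>L - j. F j (j + k))"
proof -
  have "(\<Sum>i\<le>L. \<Sum>j\<le>i. F j i) = (\<Sum>i\<le>L. \<Sum>j\<le>i. (\<lambda>j k. F j (j + k)) j (i - j))"
    by (intro sum.cong refl) auto
  also have "\<dots> = (\<Sum>(j, k)\<in>{(j, k). j + k \<le> L}. F j (j + k))"
    by (rule sum.triangle_reindex_eq[symmetric])
  also have "{(j, k). j + k \<le> L} = Sigma {..L} (\<lambda>j. {..L - j})"
    by auto
  also have "(\<Sum>(j, k)\<in>Sigma {..L} (\<lambda>j. {..L - j}). F j (j + k)) = (\<Sum>j\<le>L. \<Sum>k\<le>L - j. F j (j + k))"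
    by (rule sum.Sigma[symmetric]) auto
  finally show ?thesis .
qed

lemma conv_assoc: "conv (conv f g) h = conv f (conv g h)"
proof
  fix w :: "nat list"
  let ?L = "length w"
  have "conv (conv f g) h w =
      (\<Sum>i\<le>?L. \<Sum>j\<le>i. f (take j w) * g (drop j (take i w)) * h (drop i w))"
    unfolding conv_def sum_distrib_right
    by (intro sum.cong refl) (auto simp: min_def take_take)
  also have "\<dots> = (\<Sum>j\<le>?L. \<Sum>k\<le>?L - j.
      f (take j w) * g (drop j (take (j + k) w)) * h (drop (j + k) w))"
    by (rule sum_triangle_swap)
  also have "\<dots> = conv f (conv g h) w"
    unfolding conv_def by (simp add: sum_distrib_left take_drop drop_drop add.commute mult.assoc)
  finally show "conv (conv f g) h w = conv f (conv g h) w" .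
qed

lemma conv_monomial_Nil_left [simp]: "conv (monomial []) f = f"
proof
  fix w
  have "conv (monomial []) f w = (\<Sum>i\<in>{0}. monomial [] (take i w) * f (drop i w))"
    unfolding conv_def by (rule sum.mono_neutral_right) (auto simp: monomial_def)
  then show "conv (monomial []) f w = f w" by (simp add: monomial_def)
qed

lemma conv_monomial_Nil_right [simp]: "conv f (monomial []) = f"
proof
  fix w
  have "conv f (monomial []) w = (\<Sum>i\<in>{length w}. f (take i w) * monomial [] (drop i w))"
    unfolding conv_def by (rule sum.mono_neutral_right) (auto simp: monomial_def)
  then show "conv f (monomial []) w = f w" by (simp add: monomial_def)
qed

lemma conv_add_left: "conv (\<lambda>w. f w + g w) h = (\<lambda>w. conv f h w + conv g h w)"
  by (simp add: conv_def fun_eq_iff distrib_right sum.distrib)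

lemma conv_add_right: "conv h (\<lambda>w. f w + g w) = (\<lambda>w. conv h f w + conv h g w)"
  by (simp add: conv_def fun_eq_iff distrib_left sum.distrib)

lemma conv_scale_left: "conv (\<lambda>w. k * f w) g = (\<lambda>w. k * conv f g w)"
  by (simp add: conv_def fun_eq_iff sum_distrib_left mult.assoc)

lemma conv_support:
  assumes "conv f g w \<noteq> 0"
  obtains u v where "w = u @ v" "f u \<noteq> 0" "g v \<noteq> 0"
proof -
  from assms obtain i where "f (take i w) * g (drop i w) \<noteq> 0"
    unfolding conv_def by (meson sum.not_neutral_contains_not_neutral)
  then show thesis using that[of "take i w" "drop i w"] by simp
qed

lemma conv_monomial_monomial: "conv (monomial u) (monomial v) = monomial (u @ v)"
proof
  fix x
  have "conv (monomial u) (monomial v) x = (\<Sum>i\<in>{i. i \<le> length x \<and> take i x = u \<and> drop i x = v}. 1)"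
    unfolding conv_def atMost_def
    by (rule sum.mono_neutral_cong_right) (auto simp: monomial_def)
  also have "\<dots> = monomial (u @ v) x"
  proof (cases "x = u @ v")
    case True
    then have "{i. i \<le> length x \<and> take i x = u \<and> drop i x = v} = {length u}"
      by (auto dest: arg_cong[where f = length])
    then show ?thesis using True by (simp add: monomial_def)
  next
    case False
    then have "{i. i \<le> length x \<and> take i x = u \<and> drop i x = v} = {}"
      by (auto dest: sym[THEN trans, OF append_take_drop_id])
    then show ?thesis using False by (simp add: monomial_def)
  qed
  finally show "conv (monomial u) (monomial v) x = monomial (u @ v) x" .
qed

lemma conv_closed:
  assumes "f \<in> carrier (free_ring n)" "g \<in> carrier (free_ring n)"
  shows "conv f g \<in> carrier (free_ring n)"
proof -
  have "{w. conv f g w \<noteq> 0} \<subseteq> (\<lambda>(u, v). u @ v) ` ({w. f w \<noteq> 0} \<times> {w. g w \<noteq> 0})"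
    by (auto elim!: conv_support)
  moreover have "set w \<subseteq> {..<n}" if "conv f g w \<noteq> 0" for w
    using that assms by (elim conv_support) (auto simp: carrier_free_ring_iff)
  ultimately show ?thesis
    using assms by (auto simp: carrier_free_ring_iff intro: finite_subset)
qed

lemma monomial_closed: "set u \<subseteq> {..<n} \<Longrightarrow> monomial u \<in> carrier (free_ring n)"
  by (simp add: carrier_free_ring_iff monomial_def)

lemma pointwise_add_closed:
  assumes "f \<in> carrier (free_ring n)" "g \<in> carrier (free_ring n)"
  shows "(\<lambda>w. f w + g w) \<in> carrier (free_ring n)"
proof -
  have "{w. f w + g w \<noteq> 0} \<subseteq> {w. f w \<noteq> 0} \<union> {w. g w \<noteq> 0}"
    by auto
  then show ?thesis
    using assms by (auto simp: carrier_free_ring_iff intro: finite_subset)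
qed

lemma pointwise_scale_closed: "f \<in> carrier (free_ring n) \<Longrightarrow> (\<lambda>w. k * f w) \<in> carrier (free_ring n)"
  by (auto simp: carrier_free_ring_iff intro: finite_subset)

lemma ring_free_ring: "ring (free_ring n)"
proof (rule ringI)
  show "abelian_group (free_ring n)"
  proof (rule abelian_groupI)
    fix x assume "x \<in> carrier (free_ring n)"
    then show "\<exists>y\<in>carrier (free_ring n). y \<oplus>\<^bsub>free_ring n\<^esub> x = \<zero>\<^bsub>free_ring n\<^esub>"
      using pointwise_scale_closed[of x n "-1"] by (intro bexI[of _ "\<lambda>w. - x w"]) (simp_all add: free_ring_simps)
  qed (auto simp: free_ring_simps pointwise_add_closed add_ac, simp add: carrier_free_ring_iff)
  show "monoid (free_ring n)"
    by (rule monoidI) (simp_all add: free_ring_simps conv_closed monomial_closed conv_assoc)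
qed (simp_all add: free_ring_simps conv_add_left conv_add_right)

lemma a_inv_free_ring:
  assumes "f \<in> carrier (free_ring n)"
  shows "\<ominus>\<^bsub>free_ring n\<^esub> f = (\<lambda>w. - f w)"
proof -
  interpret ring "free_ring n" by (rule ring_free_ring)
  show ?thesis
    using assms pointwise_scale_closed[of f n "-1"] by (intro minus_equality) (simp_all add: free_ring_simps)
qed

lemma countable_carrier_free_ring: "countable (carrier (free_ring n))"
proof (rule countable_image_inj_on)
  let ?graph = "\<lambda>f :: nat list \<Rightarrow> int. (\<lambda>w. (w, f w)) ` {w. f w \<noteq> 0}"
  show "inj_on ?graph (carrier (free_ring n))"
  proof (rule inj_onI)
    fix f g :: "nat list \<Rightarrow> int" assume eq: "?graph f = ?graph g"
    have mem: "(w, c) \<in> ?graph h \<longleftrightarrow> c \<noteq> 0 \<and> h w = c" for h w c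
      by auto
    show "f = g"
    proof
      fix w
      show "f w = g w"
        using mem[of w "f w" f] mem[of w "f w" g] mem[of w "g w" g] mem[of w "g w" f] eq
        by auto
    qed
  qed
  have "?graph ` carrier (free_ring n) \<subseteq> Collect finite"
    by (auto simp: carrier_free_ring_iff)
  then show "countable (?graph ` carrier (free_ring n))"
    by (rule countable_subset) (rule countable_Collect_finite)
qed

lemma finite_support_induct:
  assumes "finite {w. f w \<noteq> 0}"
    and "Q (\<lambda>w. 0)"
    and "\<And>g h. Q g \<Longrightarrow> Q h \<Longrightarrow> Q (\<lambda>w. g w + h w)"
    and "\<And>u k. f u \<noteq> 0 \<Longrightarrow> Q (\<lambda>w. k * monomial u w)"
  shows "Q f"
proof -
  have "Q g" if "finite A" "\<And>w. g w \<noteq> 0 \<Longrightarrow> w \<in> A" "A \<subseteq> {w. f w \<noteq> 0}" for A g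
    using that
  proof (induction A arbitrary: g rule: finite_induct)
    case empty
    then have "g = (\<lambda>w. 0)" by auto
    then show ?case using assms(2) by simp
  next
    case (insert a A)
    let ?g = "\<lambda>w. if w = a then 0 else g w"
    have "Q ?g"
    proof (rule insert.IH)
      show "?g w \<noteq> 0 \<Longrightarrow> w \<in> A" for w
        using insert.prems(1)[of w] by (auto split: if_splits)
    qed (use insert.prems(2) in blast)
    moreover have "Q (\<lambda>w. g a * monomial a w)"
      using insert.prems by (intro assms(4)) auto
    ultimately have "Q (\<lambda>w. ?g w + g a * monomial a w)"
      by (rule assms(3))
    moreover have "(\<lambda>w. ?g w + g a * monomial a w) = g"
      by (simp add: monomial_def fun_eq_iff)
    ultimately show ?case by simp
  qed
  then show ?thesis using assms(1) by blast
qed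

lemma int_multiple_one_mem:
  assumes one: "monomial [] \<in> C"
    and add: "\<And>a b. a \<in> C \<Longrightarrow> b \<in> C \<Longrightarrow> (\<lambda>w. a w + b w) \<in> C"
    and neg: "\<And>a. a \<in> C \<Longrightarrow> (\<lambda>w. - a w) \<in> C"
  shows "(\<lambda>w. k * monomial [] w) \<in> C"
proof (induction k rule: int_induct[where k = 0])
  case base
  have "(\<lambda>w. monomial [] w + - monomial [] w) \<in> C" by (intro add neg one)
  then show ?case by simp
next
  case (step1 i)
  then have "(\<lambda>w. i * monomial [] w + monomial [] w) \<in> C" by (intro add one)
  then show ?case by (simp add: distrib_right)
next
  case (step2 i)
  then have "(\<lambda>w. i * monomial [] w + - monomial [] w) \<in> C" by (intro add neg one)
  then show ?case by (simp add: left_diff_distrib)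
qed

lemma free_ring_generated:
  assumes one: "monomial [] \<in> C" and var: "\<And>i. i < n \<Longrightarrow> var i \<in> C"
    and add: "\<And>a b. a \<in> C \<Longrightarrow> b \<in> C \<Longrightarrow> (\<lambda>w. a w + b w) \<in> C"
    and mult: "\<And>a b. a \<in> C \<Longrightarrow> b \<in> C \<Longrightarrow> conv a b \<in> C"
    and neg: "\<And>a. a \<in> C \<Longrightarrow> (\<lambda>w. - a w) \<in> C"
  shows "carrier (free_ring n) \<subseteq> C"
proof
  have monomial: "set u \<subseteq> {..<n} \<Longrightarrow> monomial u \<in> C" for u
  proof (induction u)
    case Nil
    show ?case by (rule one)
  next
    case (Cons c u)
    then have "conv (var c) (monomial u) \<in> C" by (intro mult var) auto
    then show ?case by (simp add: conv_monomial_monomial)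
  qed
  fix f assume f: "f \<in> carrier (free_ring n)"
  show "f \<in> C"
  proof (rule finite_support_induct[where Q = "\<lambda>g. g \<in> C"])
    show "finite {w. f w \<noteq> 0}" using f by (simp add: carrier_free_ring_iff)
    have "(\<lambda>w. 0 * monomial [] w) \<in> C" by (rule int_multiple_one_mem[OF one add neg])
    then show "(\<lambda>w. 0) \<in> C" by simp
    show "g \<in> C \<Longrightarrow> h \<in> C \<Longrightarrow> (\<lambda>w. g w + h w) \<in> C" for g h by (rule add)
  next
    fix u k assume "f u \<noteq> 0"
    then have "set u \<subseteq> {..<n}" using f by (simp add: carrier_free_ring_iff)
    then have "conv (\<lambda>w. k * monomial [] w) (monomial u) \<in> C"
      by (intro mult int_multiple_one_mem[OF one add neg] monomial)
    then show "(\<lambda>w. k * monomial u w) \<in> C" by (simp add: conv_scale_left)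
  qed
qed

lemma free_ring_induct [consumes 1, case_names one var add mult neg]:
  assumes f: "f \<in> carrier (free_ring n)"
    and one: "P \<one>\<^bsub>free_ring n\<^esub>"
    and var: "\<And>i. i < n \<Longrightarrow> P (var i)"
    and add: "\<And>a b. a \<in> carrier (free_ring n) \<Longrightarrow> b \<in> carrier (free_ring n) \<Longrightarrow>
                P a \<Longrightarrow> P b \<Longrightarrow> P (a \<oplus>\<^bsub>free_ring n\<^esub> b)"
    and mult: "\<And>a b. a \<in> carrier (free_ring n) \<Longrightarrow> b \<in> carrier (free_ring n) \<Longrightarrow>
                P a \<Longrightarrow> P b \<Longrightarrow> P (a \<otimes>\<^bsub>free_ring n\<^esub> b)"
    and neg: "\<And>a. a \<in> carrier (free_ring n) \<Longrightarrow> P a \<Longrightarrow> P (\<ominus>\<^bsub>free_ring n\<^esub> a)"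
  shows "P f"
proof -
  interpret ring "free_ring n" by (rule ring_free_ring)
  have "carrier (free_ring n) \<subseteq> {g \<in> carrier (free_ring n). P g}"
  proof (rule free_ring_generated)
    show "monomial [] \<in> {g \<in> carrier (free_ring n). P g}"
      using one by (simp add: free_ring_simps monomial_closed)
    show "var i \<in> {g \<in> carrier (free_ring n). P g}" if "i < n" for i
      using that var by (simp add: monomial_closed)
  next
    fix a b assume "a \<in> {g \<in> carrier (free_ring n). P g}" "b \<in> {g \<in> carrier (free_ring n). P g}"
    then show "(\<lambda>w. a w + b w) \<in> {g \<in> carrier (free_ring n). P g}"
      and "conv a b \<in> {g \<in> carrier (free_ring n). P g}"
      using add[of a b] mult[of a b] by (simp_all add: free_ring_simps pointwise_add_closed conv_closed)
  next
    fix a assume "a \<in> {g \<in> carrier (free_ring n). P g}"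
    then show "(\<lambda>w. - a w) \<in> {g \<in> carrier (free_ring n). P g}"
      using neg[of a] a_inv_closed[of a] by (auto simp: a_inv_free_ring)
  qed
  then show ?thesis using f by blast
qed

lemma free_ring_hom_eqI:
  assumes "ring T" "h1 \<in> ring_hom (free_ring n) T" "h2 \<in> ring_hom (free_ring n) T"
    and "\<And>i. i < n \<Longrightarrow> h1 (var i) = h2 (var i)"
    and "f \<in> carrier (free_ring n)"
  shows "h1 f = h2 f"
proof -
  interpret F: ring "free_ring n" by (rule ring_free_ring)
  interpret T: ring T by fact
  interpret H1: ring_hom_ring "free_ring n" T h1 by (intro ring_hom_ringI2 assms F.ring_axioms)
  interpret H2: ring_hom_ring "free_ring n" T h2 by (intro ring_hom_ringI2 assms F.ring_axioms)
  from assms(5) show ?thesis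
    by (induction rule: free_ring_induct) (simp_all add: assms(4))
qed

definition eval_word :: "(nat \<Rightarrow> nat list \<Rightarrow> int) \<Rightarrow> nat list \<Rightarrow> nat list \<Rightarrow> int" where
  "eval_word q u = foldr (\<lambda>c. conv (q c)) u (monomial [])"

definition subst :: "(nat \<Rightarrow> nat list \<Rightarrow> int) \<Rightarrow> (nat list \<Rightarrow> int) \<Rightarrow> nat list \<Rightarrow> int" where
  "subst q f = (\<lambda>w. \<Sum>u | f u \<noteq> 0. f u * eval_word q u w)"

lemma eval_word_simps [simp]:
  "eval_word q [] = monomial []"
  "eval_word q (c # u) = conv (q c) (eval_word q u)"
  by (simp_all add: eval_word_def)

lemma subst_eq_sum:
  assumes "finite A" "{v. f v \<noteq> 0} \<subseteq> A"
  shows "subst q f w = (\<Sum>u\<in>A. f u * eval_word q u w)"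
  unfolding subst_def by (rule sum.mono_neutral_left) (use assms in auto)

lemma lincomb_closed:
  assumes "finite A" "\<And>u. u \<in> A \<Longrightarrow> F u \<in> carrier (free_ring m)"
  shows "(\<lambda>w. \<Sum>u\<in>A. c u * F u w) \<in> carrier (free_ring m)"
  using assms
proof (induction A rule: finite_induct)
  case empty
  then show ?case by (simp add: carrier_free_ring_iff)
next
  case (insert a A)
  then show ?case by (simp add: pointwise_add_closed pointwise_scale_closed)
qed

lemma eval_word_closed:
  "(\<And>c. c \<in> set u \<Longrightarrow> q c \<in> carrier (free_ring m)) \<Longrightarrow> eval_word q u \<in> carrier (free_ring m)"
  by (induction u) (simp_all add: monomial_closed conv_closed)

lemma subst_closed:
  assumes "f \<in> carrier (free_ring n)" "\<And>c. c < n \<Longrightarrow> q c \<in> carrier (free_ring m)"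
  shows "subst q f \<in> carrier (free_ring m)"
  unfolding subst_def using assms
  by (intro lincomb_closed eval_word_closed) (auto simp: carrier_free_ring_iff)

lemma subst_add:
  assumes "finite {v. f v \<noteq> 0}" "finite {v. g v \<noteq> 0}"
  shows "subst q (\<lambda>w. f w + g w) = (\<lambda>w. subst q f w + subst q g w)"
proof
  fix w
  let ?A = "{v. f v \<noteq> 0} \<union> {v. g v \<noteq> 0}"
  have "subst q (\<lambda>w. f w + g w) w = (\<Sum>u\<in>?A. (f u + g u) * eval_word q u w)"
    using assms by (intro subst_eq_sum) auto
  also have "\<dots> = subst q f w + subst q g w"
    using assms subst_eq_sum[of ?A f q w] subst_eq_sum[of ?A g q w]
    by (simp add: distrib_right sum.distrib)
  finally show "subst q (\<lambda>w. f w + g w) w = subst q f w + subst q g w" .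
qed

lemma subst_neg: "subst q (\<lambda>w. - f w) = (\<lambda>w. - subst q f w)"
  by (simp add: subst_def fun_eq_iff sum_negf)

lemma subst_monomial: "subst q (monomial u) = eval_word q u"
proof
  fix w
  have "subst q (monomial u) w = (\<Sum>v\<in>{u}. monomial u v * eval_word q v w)"
    by (rule subst_eq_sum) (auto simp: monomial_def)
  then show "subst q (monomial u) w = eval_word q u w" by (simp add: monomial_def)
qed

lemma conv_lincomb_right:
  assumes "finite A"
  shows "conv h (\<lambda>w. \<Sum>u\<in>A. a u * F u w) = (\<lambda>w. \<Sum>u\<in>A. a u * conv h (F u) w)"
  unfolding conv_def
  by (simp add: fun_eq_iff sum_distrib_left mult.left_commute sum.swap[where A = A])

lemma conv_Nil: "conv f g [] = f [] * g []"
  by (simp add: conv_def)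

lemma conv_var_left: "conv (var c) g (d # v) = (if d = c then g v else 0)"
proof -
  have "conv (var c) g (d # v) = (\<Sum>i\<in>{1}. var c (take i (d # v)) * g (drop i (d # v)))"
    unfolding conv_def
    by (rule sum.mono_neutral_right)
       (auto simp: monomial_def take_Cons' dest: arg_cong[where f = length])
  then show ?thesis by (simp add: monomial_def)
qed

lemma subst_conv_var:
  assumes "finite {v. g v \<noteq> 0}"
  shows "subst q (conv (var c) g) = conv (q c) (subst q g)"
proof
  fix w
  let ?S = "{v. g v \<noteq> 0}"
  have "{v. conv (var c) g v \<noteq> 0} \<subseteq> Cons c ` ?S"
  proof
    fix v assume "v \<in> {v. conv (var c) g v \<noteq> 0}"
    then show "v \<in> Cons c ` ?S"
      by (cases v) (auto simp: conv_Nil conv_var_left split: if_splits, simp add: monomial_def)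
  qed
  then have "subst q (conv (var c) g) w = (\<Sum>u\<in>Cons c ` ?S. conv (var c) g u * eval_word q u w)"
    using assms by (intro subst_eq_sum) auto
  also have "\<dots> = (\<Sum>v\<in>?S. g v * conv (q c) (eval_word q v) w)"
    by (simp add: sum.reindex conv_var_left)
  also have "\<dots> = conv (q c) (subst q g) w"
    by (simp add: subst_def conv_lincomb_right[OF assms])
  finally show "subst q (conv (var c) g) w = conv (q c) (subst q g) w" .
qed

lemma subst_conv:
  assumes f: "f \<in> carrier (free_ring n)" and g: "g \<in> carrier (free_ring n)"
  shows "subst q (conv f g) = conv (subst q f) (subst q g)"
  using f g
proof (induction arbitrary: g rule: free_ring_induct)
  case one
  then show ?case by (simp add: free_ring_simps subst_monomial)
next
  case (var i)
  then show ?case by (simp add: subst_conv_var subst_monomial carrier_free_ring_iff)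
next
  case (add a b)
  have fin: "finite {w. x w \<noteq> 0}" if "x \<in> carrier (free_ring n)" for x
    using that by (simp add: carrier_free_ring_iff)
  show ?case
    using add conv_closed[OF add.hyps(1) add.prems] conv_closed[OF add.hyps(2) add.prems]
    by (simp add: free_ring_simps conv_add_left subst_add fin)
next
  case (mult a b)
  then show ?case by (simp add: free_ring_simps conv_assoc conv_closed)
next
  case (neg a)
  then show ?case
    using conv_scale_left[of "-1" a g] conv_scale_left[of "-1" "subst q a"]
    by (simp add: a_inv_free_ring subst_neg)
qed

lemma subst_ring_hom:
  assumes "\<And>c. c < n \<Longrightarrow> q c \<in> carrier (free_ring m)"
  shows "subst q \<in> ring_hom (free_ring n) (free_ring m)"
proof (rule ring_hom_memI)
  fix x y assume xy: "x \<in> carrier (free_ring n)" "y \<in> carrier (free_ring n)"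
  then show "subst q (x \<otimes>\<^bsub>free_ring n\<^esub> y) = subst q x \<otimes>\<^bsub>free_ring m\<^esub> subst q y"
    by (simp add: free_ring_simps subst_conv)
  show "subst q (x \<oplus>\<^bsub>free_ring n\<^esub> y) = subst q x \<oplus>\<^bsub>free_ring m\<^esub> subst q y"
    using xy by (simp add: free_ring_simps subst_add carrier_free_ring_iff)
qed (simp_all add: assms subst_closed free_ring_simps subst_monomial)

section \<open>Monomial ideals\<close>

definition has_factor :: "nat list set \<Rightarrow> nat list \<Rightarrow> bool" where
  "has_factor M w \<longleftrightarrow> (\<exists>p m s. m \<in> M \<and> w = p @ m @ s)"

definition monomial_ideal :: "nat \<Rightarrow> nat list set \<Rightarrow> (nat list \<Rightarrow> int) set" where
  "monomial_ideal n M = {f \<in> carrier (free_ring n). \<forall>w. f w \<noteq> 0 \<longrightarrow> has_factor M w}"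

lemma has_factor_append:
  "has_factor M v \<Longrightarrow> has_factor M (u @ v)" "has_factor M u \<Longrightarrow> has_factor M (u @ v)"
  unfolding has_factor_def by (metis append.assoc)+

lemma has_factor_self: "m \<in> M \<Longrightarrow> has_factor M m"
  unfolding has_factor_def by (metis append.left_neutral append.right_neutral)

lemma has_factor_mono: "M \<subseteq> M' \<Longrightarrow> has_factor M w \<Longrightarrow> has_factor M' w"
  unfolding has_factor_def by blast

lemma has_factor_UN: "has_factor (\<Union>k. M k) w \<longleftrightarrow> (\<exists>k. has_factor (M k) w)"
  unfolding has_factor_def by blast

lemma monomial_ideal_mono: "M \<subseteq> M' \<Longrightarrow> monomial_ideal n M \<subseteq> monomial_ideal n M'"
  unfolding monomial_ideal_def using has_factor_mono by blast

lemma monomial_in_monomial_ideal: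
  assumes "m \<in> M" "set m \<subseteq> {..<n}"
  shows "monomial m \<in> monomial_ideal n M"
  using monomial_closed[OF assms(2)] assms(1)
  by (simp add: monomial_ideal_def monomial_def has_factor_self)

lemma ideal_monomial_ideal: "ideal (monomial_ideal n M) (free_ring n)"
proof -
  interpret ring "free_ring n" by (rule ring_free_ring)
  have conv_mem: "conv x a \<in> monomial_ideal n M" "conv a x \<in> monomial_ideal n M"
    if "a \<in> monomial_ideal n M" "x \<in> carrier (free_ring n)" for a x
    using that
    by (auto simp: monomial_ideal_def conv_closed has_factor_append elim!: conv_support)
  show ?thesis
  proof (rule idealI[OF ring_axioms add.subgroupI])
    show "monomial_ideal n M \<subseteq> carrier (free_ring n)"
      by (auto simp: monomial_ideal_def)
    show "monomial_ideal n M \<noteq> {}"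
      using zero_closed by (auto simp: monomial_ideal_def free_ring_simps)
  next
    fix a assume "a \<in> monomial_ideal n M"
    then show "\<ominus>\<^bsub>free_ring n\<^esub> a \<in> monomial_ideal n M"
      using a_inv_closed[of a] by (auto simp: monomial_ideal_def a_inv_free_ring)
  next
    fix a b assume ab: "a \<in> monomial_ideal n M" "b \<in> monomial_ideal n M"
    have "has_factor M w" if "a w + b w \<noteq> 0" for w
      using ab that by (cases "a w = 0") (auto simp: monomial_ideal_def)
    then show "a \<oplus>\<^bsub>free_ring n\<^esub> b \<in> monomial_ideal n M"
      using ab by (simp add: monomial_ideal_def free_ring_simps pointwise_add_closed)
  qed (simp_all add: free_ring_simps conv_mem)
qed

lemma genideal_monomials:
  assumes "\<And>m. m \<in> M \<Longrightarrow> set m \<subseteq> {..<n}"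
  shows "genideal (free_ring n) (monomial ` M) = monomial_ideal n M"
proof -
  interpret ring "free_ring n" by (rule ring_free_ring)
  let ?J = "genideal (free_ring n) (monomial ` M)"
  have gens: "monomial ` M \<subseteq> carrier (free_ring n)"
    using assms by (auto intro: monomial_closed)
  interpret J: ideal ?J "free_ring n" by (rule genideal_ideal[OF gens])
  show ?thesis
  proof
    show "?J \<subseteq> monomial_ideal n M"
      using assms by (intro genideal_minimal ideal_monomial_ideal) (auto intro: monomial_in_monomial_ideal)
  next
    show "monomial_ideal n M \<subseteq> ?J"
    proof
      fix f assume f: "f \<in> monomial_ideal n M"
      then have f_carrier: "f \<in> carrier (free_ring n)" by (simp add: monomial_ideal_def)
      show "f \<in> ?J"
      proof (rule finite_support_induct[where Q = "\<lambda>g. g \<in> ?J"])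
        show "finite {w. f w \<noteq> 0}" using f_carrier by (simp add: carrier_free_ring_iff)
        show "(\<lambda>w. 0) \<in> ?J" using J.zero_closed by (simp add: free_ring_simps)
        show "g \<in> ?J \<Longrightarrow> h \<in> ?J \<Longrightarrow> (\<lambda>w. g w + h w) \<in> ?J" for g h
          using J.a_closed by (simp add: free_ring_simps)
      next
        fix w k assume "f w \<noteq> 0"
        then obtain p m s where pms: "m \<in> M" "w = p @ m @ s"
          using f by (auto simp: monomial_ideal_def has_factor_def)
        have "set w \<subseteq> {..<n}" using f_carrier \<open>f w \<noteq> 0\<close> by (simp add: carrier_free_ring_iff)
        then have "conv (\<lambda>w. k * monomial [] w) (conv (monomial p) (conv (monomial m) (monomial s))) \<in> ?J"
          using pms genideal_self[OF gens]
          by (intro J.I_l_closed[unfolded free_ring_simps] J.I_r_closed[unfolded free_ring_simps]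
                    pointwise_scale_closed monomial_closed) auto
        then show "(\<lambda>v. k * monomial w v) \<in> ?J"
          by (simp add: conv_scale_left conv_monomial_monomial pms(2))
      qed
    qed
  qed
qed

lemma monomial_ideal_Int:
  assumes "\<And>w. set w \<subseteq> {..<n} \<Longrightarrow> has_factor M w \<and> has_factor M' w \<longleftrightarrow> has_factor M'' w"
  shows "monomial_ideal n M \<inter> monomial_ideal n M' = monomial_ideal n M''"
proof -
  have "has_factor M w \<and> has_factor M' w \<longleftrightarrow> has_factor M'' w"
    if "f \<in> carrier (free_ring n)" "f w \<noteq> 0" for f w
    using that assms by (simp add: carrier_free_ring_iff)
  then show ?thesis by (auto simp: monomial_ideal_def)
qed

lemma monomial_ideal_UN:
  fixes M :: "nat \<Rightarrow> nat list set"
  assumes "mono M"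
  shows "monomial_ideal n (\<Union>k. M k) = (\<Union>k. monomial_ideal n (M k))"
proof
  show "(\<Union>k. monomial_ideal n (M k)) \<subseteq> monomial_ideal n (\<Union>k. M k)"
    using monomial_ideal_mono by blast
next
  show "monomial_ideal n (\<Union>k. M k) \<subseteq> (\<Union>k. monomial_ideal n (M k))"
  proof
    fix f assume f: "f \<in> monomial_ideal n (\<Union>k. M k)"
    have mono: "mono (\<lambda>k. {w. has_factor (M k) w})"
      using assms by (auto simp: mono_def intro: has_factor_mono)
    have fin: "finite {w. f w \<noteq> 0}"
      using f by (simp add: monomial_ideal_def carrier_free_ring_iff)
    have sub: "{w. f w \<noteq> 0} \<subseteq> (\<Union>k. {w. has_factor (M k) w})"
      using f by (auto simp: monomial_ideal_def has_factor_UN)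
    obtain k where "{w. f w \<noteq> 0} \<subseteq> {w. has_factor (M k) w}"
      by (rule finite_subset_mono_Union[OF mono fin sub])
    then show "f \<in> (\<Union>k. monomial_ideal n (M k))"
      using f unfolding monomial_ideal_def by blast
  qed
qed

section \<open>Presentations\<close>

lemma finitely_presentedE:
  assumes "ring T" "finitely_presented T"
  obtains n G \<psi> where "finite G" "G \<subseteq> carrier (free_ring n)"
    "\<psi> \<in> ring_hom (free_ring n) T" "\<psi> ` carrier (free_ring n) = carrier T"
    "a_kernel (free_ring n) T \<psi> = genideal (free_ring n) G"
proof -
  obtain n G \<iota> where G: "finite G" "G \<subseteq> carrier (free_ring n)"
    and \<iota>: "\<iota> \<in> ring_iso T (free_ring n Quot genideal (free_ring n) G)"
    using assms(2) by (auto simp: finitely_presented_def is_ring_iso_def)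
  interpret F: ring "free_ring n" by (rule ring_free_ring)
  interpret I: ideal "genideal (free_ring n) G" "free_ring n" by (rule F.genideal_ideal[OF G(2)])
  let ?\<kappa> = "inv_into (carrier T) \<iota>"
  have \<kappa>: "?\<kappa> \<in> ring_iso (free_ring n Quot genideal (free_ring n) G) T"
    by (rule ring_iso_set_sym[OF assms(1) \<iota>])
  then have \<kappa>_hom: "?\<kappa> \<in> ring_hom (free_ring n Quot genideal (free_ring n) G) T"
    and \<kappa>_bij: "bij_betw ?\<kappa> (carrier (free_ring n Quot genideal (free_ring n) G)) (carrier T)"
    by (simp_all add: ring_iso_def)
  let ?\<psi> = "?\<kappa> \<circ> (+>\<^bsub>free_ring n\<^esub>) (genideal (free_ring n) G)"
  show thesis
  proof (rule that[OF G])
    show "?\<psi> \<in> ring_hom (free_ring n) T"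
      by (rule ring_hom_trans[OF I.rcos_ring_hom \<kappa>_hom])
    show "?\<psi> ` carrier (free_ring n) = carrier T"
      unfolding image_comp[symmetric] I.rcos_ring_hom_surj using \<kappa>_bij by (simp add: bij_betw_def)
    show "a_kernel (free_ring n) T ?\<psi> = genideal (free_ring n) G"
      using a_kernel_comp_inj[OF I.quotient_is_ring assms(1) \<kappa>_hom _ I.rcos_ring_hom] \<kappa>_bij
      by (simp add: bij_betw_def I.a_kernel_rcos_ring_hom)
  qed
qed

lemma finitely_presented_image:
  assumes "ring T" "\<psi> \<in> ring_hom (free_ring n) T" "finite G" "G \<subseteq> carrier (free_ring n)"
    and "a_kernel (free_ring n) T \<psi> = genideal (free_ring n) G"
  shows "finitely_presented (T\<lparr>carrier := \<psi> ` carrier (free_ring n)\<rparr>)"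
proof -
  interpret F: ring "free_ring n" by (rule ring_free_ring)
  interpret \<psi>: ring_hom_ring "free_ring n" T \<psi> by (intro ring_hom_ringI2 assms F.ring_axioms)
  have "free_ring n Quot genideal (free_ring n) G \<simeq> T\<lparr>carrier := \<psi> ` carrier (free_ring n)\<rparr>"
    using \<psi>.FactRing_iso_set_aux assms(5) by (auto simp: is_ring_iso_def)
  then show ?thesis
    unfolding finitely_presented_def
    using assms(3,4) ring_iso_sym ideal.quotient_is_ring[OF F.genideal_ideal[OF assms(4)]] by blast
qed

lemma finitely_presented_iso:
  assumes "ring R" "R \<simeq> R'" "finitely_presented R"
  shows "finitely_presented R'"
proof -
  obtain n G where G: "finite G" "G \<subseteq> carrier (free_ring n)"
    and iso: "R \<simeq> free_ring n Quot genideal (free_ring n) G"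
    using assms(3) unfolding finitely_presented_def by blast
  have "R' \<simeq> free_ring n Quot genideal (free_ring n) G"
    by (rule ring_iso_trans[OF ring_iso_sym[OF assms(1,2)] iso])
  with G show ?thesis unfolding finitely_presented_def by blast
qed

lemma finitely_presented_subring_iso:
  assumes "ring P" "h \<in> ring_iso P R" "subring S P" "finitely_presented (P\<lparr>carrier := S\<rparr>)"
  shows "finitely_presented (R\<lparr>carrier := h ` S\<rparr>)"
proof (rule finitely_presented_iso[OF ring.subring_is_ring[OF assms(1,3)] _ assms(4)])
  have S: "S \<subseteq> carrier P"
    by (rule subringE(1)[OF assms(3)])
  with assms(2) have "inj_on h S"
    by (auto simp: ring_iso_def bij_betw_def intro: inj_on_subset)
  with assms(2) have "h \<in> ring_iso (P\<lparr>carrier := S\<rparr>) (R\<lparr>carrier := h ` S\<rparr>)"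
    using subsetD[OF S] by (auto simp: ring_iso_def ring_hom_def bij_betw_def)
  then show "P\<lparr>carrier := S\<rparr> \<simeq> R\<lparr>carrier := h ` S\<rparr>"
    unfolding is_ring_iso_def by blast
qed

lemma free_ring_lift:
  assumes "ring T" "\<phi> \<in> ring_hom (free_ring m) T" "\<phi> ` carrier (free_ring m) = carrier T"
    and "\<psi> \<in> ring_hom (free_ring n) T"
  obtains \<alpha> where "\<alpha> \<in> ring_hom (free_ring n) (free_ring m)"
    "\<forall>f \<in> carrier (free_ring n). \<phi> (\<alpha> f) = \<psi> f"
proof -
  have "\<psi> (var i) \<in> \<phi> ` carrier (free_ring m)" if "i < n" for i
    using that assms(3) ring_hom_closed[OF assms(4) monomial_closed, of "[i]"] by simp
  then have ex: "\<forall>i. \<exists>x. i < n \<longrightarrow> x \<in> carrier (free_ring m) \<and> \<phi> x = \<psi> (var i)"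
    by fastforce
  then obtain q where q: "\<forall>i. i < n \<longrightarrow> q i \<in> carrier (free_ring m) \<and> \<phi> (q i) = \<psi> (var i)"
    using choice[OF ex] by blast
  have \<alpha>: "subst q \<in> ring_hom (free_ring n) (free_ring m)"
    using q by (intro subst_ring_hom) blast
  show thesis
  proof (rule that[OF \<alpha>])
    show "\<forall>f \<in> carrier (free_ring n). \<phi> (subst q f) = \<psi> f"
      using free_ring_hom_eqI[OF assms(1) ring_hom_trans[OF \<alpha> assms(2)] assms(4)]
        q by (simp add: subst_monomial)
  qed
qed

lemma free_ring_endo_congruent:
  assumes \<gamma>: "\<gamma> \<in> ring_hom (free_ring m) (free_ring m)" and J: "ideal J (free_ring m)"
    and vars: "\<And>j. j < m \<Longrightarrow> var j \<ominus>\<^bsub>free_ring m\<^esub> \<gamma> (var j) \<in> J"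
    and z: "z \<in> carrier (free_ring m)"
  shows "z \<ominus>\<^bsub>free_ring m\<^esub> \<gamma> z \<in> J"
proof -
  interpret F: ring "free_ring m" by (rule ring_free_ring)
  interpret J: ideal J "free_ring m" by (rule J)
  have "J +>\<^bsub>free_ring m\<^esub> z = ((+>\<^bsub>free_ring m\<^esub>) J \<circ> \<gamma>) z"
  proof (rule free_ring_hom_eqI[OF J.quotient_is_ring J.rcos_ring_hom _ _ z])
    show "(+>\<^bsub>free_ring m\<^esub>) J \<circ> \<gamma> \<in> ring_hom (free_ring m) (free_ring m Quot J)"
      by (rule ring_hom_trans[OF \<gamma> J.rcos_ring_hom])
    show "J +>\<^bsub>free_ring m\<^esub> var j = ((+>\<^bsub>free_ring m\<^esub>) J \<circ> \<gamma>) (var j)" if "j < m" for j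
      using vars[OF that] that ring_hom_closed[OF \<gamma>, of "var j"]
      by (simp add: F.quotient_eq_iff_same_a_r_cos[OF J] monomial_closed)
  qed
  then show ?thesis
    using z ring_hom_closed[OF \<gamma> z] by (simp add: F.quotient_eq_iff_same_a_r_cos[OF J])
qed

lemma lifted_relations_in_kernel:
  assumes T: "ring T" and \<phi>: "\<phi> \<in> ring_hom (free_ring m) T"
    and \<alpha>: "\<alpha> \<in> ring_hom (free_ring n) (free_ring m)" "\<forall>f \<in> carrier (free_ring n). \<phi> (\<alpha> f) = \<psi> f"
    and \<beta>: "\<beta> \<in> ring_hom (free_ring m) (free_ring n)" "\<forall>f \<in> carrier (free_ring m). \<psi> (\<beta> f) = \<phi> f"
    and G: "G \<subseteq> carrier (free_ring n)" "\<And>g. g \<in> G \<Longrightarrow> \<psi> g = \<zero>\<^bsub>T\<^esub>"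
  shows "\<alpha> ` G \<union> (\<lambda>j. var j \<ominus>\<^bsub>free_ring m\<^esub> \<alpha> (\<beta> (var j))) ` {..<m} \<subseteq> a_kernel (free_ring m) T \<phi>"
proof -
  interpret Fm: ring "free_ring m" by (rule ring_free_ring)
  interpret \<phi>: ring_hom_ring "free_ring m" T \<phi> by (intro ring_hom_ringI2 T \<phi> Fm.ring_axioms)
  have "\<alpha> g \<in> a_kernel (free_ring m) T \<phi>" if "g \<in> G" for g
    using that G \<alpha> ring_hom_closed[OF \<alpha>(1)] unfolding a_kernel_def' by (simp add: subset_iff)
  moreover have "var j \<ominus>\<^bsub>free_ring m\<^esub> \<alpha> (\<beta> (var j)) \<in> a_kernel (free_ring m) T \<phi>" if "j < m" for j
  proof (rule \<phi>.minus_mem_kernel)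
    show v: "var j \<in> carrier (free_ring m)"
      using that by (intro monomial_closed) simp
    show "\<alpha> (\<beta> (var j)) \<in> carrier (free_ring m)"
      by (rule ring_hom_closed[OF \<alpha>(1) ring_hom_closed[OF \<beta>(1) v]])
    show "\<phi> (var j) = \<phi> (\<alpha> (\<beta> (var j)))"
      using \<alpha>(2) \<beta>(2) ring_hom_closed[OF \<beta>(1) v] v by simp
  qed
  ultimately show ?thesis by blast
qed

lemma kernel_subset_ideal_of_lift:
  assumes \<alpha>: "\<alpha> \<in> ring_hom (free_ring n) (free_ring m)"
    and \<beta>: "\<beta> \<in> ring_hom (free_ring m) (free_ring n)"
    and \<phi>\<beta>: "\<forall>f \<in> carrier (free_ring m). \<psi> (\<beta> f) = \<phi> f"
    and \<psi>: "a_kernel (free_ring n) T \<psi> = genideal (free_ring n) G" "G \<subseteq> carrier (free_ring n)"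
    and J: "ideal J (free_ring m)" "\<alpha> ` G \<subseteq> J"
    and vars: "\<And>j. j < m \<Longrightarrow> var j \<ominus>\<^bsub>free_ring m\<^esub> \<alpha> (\<beta> (var j)) \<in> J"
  shows "a_kernel (free_ring m) T \<phi> \<subseteq> J"
proof
  interpret Fm: ring "free_ring m" by (rule ring_free_ring)
  interpret J: ideal J "free_ring m" by (rule J(1))
  have \<alpha>\<beta>: "\<alpha> \<circ> \<beta> \<in> ring_hom (free_ring m) (free_ring m)"
    by (rule ring_hom_trans[OF \<beta> \<alpha>])
  fix z assume "z \<in> a_kernel (free_ring m) T \<phi>"
  then have z: "z \<in> carrier (free_ring m)" and "\<phi> z = \<zero>\<^bsub>T\<^esub>"
    unfolding a_kernel_def' by blast+
  then have "\<beta> z \<in> a_kernel (free_ring n) T \<psi>"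
    using \<phi>\<beta> ring_hom_closed[OF \<beta> z] unfolding a_kernel_def' by simp
  then have "\<beta> z \<in> genideal (free_ring n) G"
    using \<psi>(1) by simp
  moreover have "\<alpha> ` genideal (free_ring n) G \<subseteq> J"
    by (rule hom_genideal_subset[OF ring_free_ring ring_free_ring \<alpha> \<psi>(2) J])
  ultimately have "\<alpha> (\<beta> z) \<in> J" by blast
  moreover have "z \<ominus>\<^bsub>free_ring m\<^esub> (\<alpha> \<circ> \<beta>) z \<in> J"
  proof (rule free_ring_endo_congruent[OF \<alpha>\<beta> J(1) _ z])
    show "var j \<ominus>\<^bsub>free_ring m\<^esub> (\<alpha> \<circ> \<beta>) (var j) \<in> J" if "j < m" for j
      using vars[OF that] by simp
  qed
  ultimately show "z \<in> J"
    using z ring_hom_closed[OF \<alpha>\<beta> z] J.mem_of_minus_mem[of z "\<alpha> (\<beta> z)"] by simp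
qed

lemma kernel_finitely_generated:
  assumes T: "ring T" "finitely_presented T"
    and \<phi>: "\<phi> \<in> ring_hom (free_ring m) T" "\<phi> ` carrier (free_ring m) = carrier T"
  obtains D where "finite D" "D \<subseteq> carrier (free_ring m)"
    "a_kernel (free_ring m) T \<phi> = genideal (free_ring m) D"
proof -
  obtain n G \<psi> where G: "finite G" "G \<subseteq> carrier (free_ring n)"
    and \<psi>: "\<psi> \<in> ring_hom (free_ring n) T" "\<psi> ` carrier (free_ring n) = carrier T"
      "a_kernel (free_ring n) T \<psi> = genideal (free_ring n) G"
    by (rule finitely_presentedE[OF T])
  obtain \<alpha> where \<alpha>: "\<alpha> \<in> ring_hom (free_ring n) (free_ring m)"
    "\<forall>f \<in> carrier (free_ring n). \<phi> (\<alpha> f) = \<psi> f"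
    by (rule free_ring_lift[OF T(1) \<phi> \<psi>(1)])
  obtain \<beta> where \<beta>: "\<beta> \<in> ring_hom (free_ring m) (free_ring n)"
    "\<forall>f \<in> carrier (free_ring m). \<psi> (\<beta> f) = \<phi> f"
    by (rule free_ring_lift[OF T(1) \<psi>(1,2) \<phi>(1)])
  interpret Fm: ring "free_ring m" by (rule ring_free_ring)
  interpret \<phi>: ring_hom_ring "free_ring m" T \<phi> by (intro ring_hom_ringI2 T(1) \<phi>(1) Fm.ring_axioms)
  define D where "D = \<alpha> ` G \<union> (\<lambda>j. var j \<ominus>\<^bsub>free_ring m\<^esub> \<alpha> (\<beta> (var j))) ` {..<m}"
  have "\<psi> g = \<zero>\<^bsub>T\<^esub>" if "g \<in> G" for g
    using that \<psi>(3) ring.genideal_self[OF ring_free_ring G(2)] unfolding a_kernel_def' by blast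
  then have D_kernel: "D \<subseteq> a_kernel (free_ring m) T \<phi>"
    unfolding D_def by (rule lifted_relations_in_kernel[OF T(1) \<phi>(1) \<alpha> \<beta> G(2)])
  then have D_carrier: "D \<subseteq> carrier (free_ring m)"
    unfolding a_kernel_def' by blast
  have "genideal (free_ring m) D \<subseteq> a_kernel (free_ring m) T \<phi>"
    by (rule Fm.genideal_minimal[OF \<phi>.kernel_is_ideal D_kernel])
  moreover have "a_kernel (free_ring m) T \<phi> \<subseteq> genideal (free_ring m) D"
  proof (rule kernel_subset_ideal_of_lift[OF \<alpha>(1) \<beta> \<psi>(3) G(2) Fm.genideal_ideal[OF D_carrier]])
    show "\<alpha> ` G \<subseteq> genideal (free_ring m) D"
      using Fm.genideal_self[OF D_carrier] unfolding D_def by blast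
    show "var j \<ominus>\<^bsub>free_ring m\<^esub> \<alpha> (\<beta> (var j)) \<in> genideal (free_ring m) D" if "j < m" for j
      using that Fm.genideal_self[OF D_carrier] unfolding D_def by blast
  qed
  moreover have "finite D"
    using G(1) by (simp add: D_def)
  ultimately show thesis
    using that D_carrier by blast
qed

lemma genideal_chain_stabilizes:
  fixes K :: "nat \<Rightarrow> 'a set"
  assumes "ring R" "\<And>k. ideal (K k) R" "mono K"
    and "finite D" "D \<subseteq> carrier R" "genideal R D = (\<Union>k. K k)"
  obtains k where "K k = (\<Union>k. K k)"
proof -
  interpret ring R by fact
  have "D \<subseteq> (\<Union>k. K k)"
    using genideal_self[OF assms(5)] assms(6) by simp
  then obtain k where "D \<subseteq> K k"
    by (rule finite_subset_mono_Union[OF assms(3,4)])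
  then have "genideal R D \<subseteq> K k"
    by (rule genideal_minimal[OF assms(2)])
  then have "K k = (\<Union>k. K k)"
    using assms(6) by blast
  then show thesis by (rule that)
qed

lemma not_finitely_presented_chain:
  fixes K :: "nat \<Rightarrow> (nat list \<Rightarrow> int) set"
  assumes "ring T" "\<phi> \<in> ring_hom (free_ring m) T" "\<phi> ` carrier (free_ring m) = carrier T"
    and "\<And>k. ideal (K k) (free_ring m)" "mono K" "a_kernel (free_ring m) T \<phi> = (\<Union>k. K k)"
    and "\<And>k. K k \<noteq> (\<Union>k. K k)"
  shows "\<not> finitely_presented T"
proof
  assume "finitely_presented T"
  then obtain D where "finite D" "D \<subseteq> carrier (free_ring m)"
    "a_kernel (free_ring m) T \<phi> = genideal (free_ring m) D"
    by (rule kernel_finitely_generated[OF assms(1) _ assms(2,3)])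
  then obtain k where "K k = (\<Union>k. K k)"
    using genideal_chain_stabilizes[OF ring_free_ring assms(4,5)] assms(6) by metis
  then show False using assms(7) by blast
qed

lemma a_kernel_fst_comp_subset:
  assumes F: "ring F" and A: "ring A" and B: "ring B" and \<psi>: "\<psi> \<in> ring_hom F (RDirProd A B)"
    and u: "u \<in> carrier F" "\<psi> u = (\<zero>\<^bsub>A\<^esub>, \<one>\<^bsub>B\<^esub>)"
    and G: "G \<subseteq> carrier F" "a_kernel F (RDirProd A B) \<psi> = genideal F G"
  shows "a_kernel F A (fst \<circ> \<psi>) \<subseteq> genideal F (insert u G)"
proof
  interpret F: ring F by (rule F)
  interpret A: ring A by (rule A)
  interpret B: ring B by (rule B)
  interpret \<psi>: ring_hom_ring F "RDirProd A B" \<psi>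
    by (intro ring_hom_ringI2 F RDirProd_ring A B \<psi>)
  have ins: "insert u G \<subseteq> carrier F"
    using u(1) G(1) by simp
  interpret J: ideal "genideal F (insert u G)" F by (rule F.genideal_ideal[OF ins])
  fix x assume "x \<in> a_kernel F A (fst \<circ> \<psi>)"
  then have x: "x \<in> carrier F" "fst (\<psi> x) = \<zero>\<^bsub>A\<^esub>"
    unfolding a_kernel_def' by simp_all
  obtain b where "\<psi> x = (\<zero>\<^bsub>A\<^esub>, b)" "b \<in> carrier B"
    using x \<psi>.hom_closed[OF x(1)] by (cases "\<psi> x") (auto simp: RDirProd_carrier)
  then have "\<psi> (x \<otimes>\<^bsub>F\<^esub> u) = \<psi> x"
    using x(1) u by (simp add: RDirProd_simps)
  then have "x \<ominus>\<^bsub>F\<^esub> x \<otimes>\<^bsub>F\<^esub> u \<in> genideal F G"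
    using \<psi>.minus_mem_kernel[of x "x \<otimes>\<^bsub>F\<^esub> u"] x(1) u(1) G(2) by simp
  then have "x \<ominus>\<^bsub>F\<^esub> x \<otimes>\<^bsub>F\<^esub> u \<in> genideal F (insert u G)"
    using F.subset_Idl_subset[OF ins subset_insertI] by blast
  moreover have "x \<otimes>\<^bsub>F\<^esub> u \<in> genideal F (insert u G)"
    using F.genideal_self[OF ins] by (intro J.I_l_closed x(1)) simp
  ultimately show "x \<in> genideal F (insert u G)"
    by (rule J.mem_of_minus_mem[OF _ _ x(1) F.m_closed[OF x(1) u(1)]])
qed

lemma a_kernel_fst_comp:
  assumes F: "ring F" and A: "ring A" and B: "ring B" and \<psi>: "\<psi> \<in> ring_hom F (RDirProd A B)"
    and u: "u \<in> carrier F" "\<psi> u = (\<zero>\<^bsub>A\<^esub>, \<one>\<^bsub>B\<^esub>)"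
    and G: "G \<subseteq> carrier F" "a_kernel F (RDirProd A B) \<psi> = genideal F G"
  shows "a_kernel F A (fst \<circ> \<psi>) = genideal F (insert u G)"
proof (rule equalityI[OF a_kernel_fst_comp_subset[OF assms]])
  interpret F: ring F by (rule F)
  interpret \<chi>: ring_hom_ring F A "fst \<circ> \<psi>"
    by (intro ring_hom_ringI2 F A ring_hom_trans[OF \<psi> fst_ring_hom_RDirProd])
  have "fst (\<psi> g) = \<zero>\<^bsub>A\<^esub>" if "g \<in> G" for g
  proof -
    have "g \<in> a_kernel F (RDirProd A B) \<psi>"
      using that G F.genideal_self by blast
    then show ?thesis unfolding a_kernel_def' by (simp add: RDirProd_simps)
  qed
  then have "insert u G \<subseteq> a_kernel F A (fst \<circ> \<psi>)"
    using u G(1) unfolding a_kernel_def' by auto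
  then show "genideal F (insert u G) \<subseteq> a_kernel F A (fst \<circ> \<psi>)"
    by (rule F.genideal_minimal[OF \<chi>.kernel_is_ideal])
qed

lemma finitely_presented_RDirProd_fst:
  assumes A: "ring A" and B: "ring B" and fp: "finitely_presented (RDirProd A B)"
  shows "finitely_presented A"
proof -
  interpret B: ring B by (rule B)
  obtain n G \<psi> where G: "finite G" "G \<subseteq> carrier (free_ring n)"
    and \<psi>: "\<psi> \<in> ring_hom (free_ring n) (RDirProd A B)"
      "\<psi> ` carrier (free_ring n) = carrier (RDirProd A B)"
      "a_kernel (free_ring n) (RDirProd A B) \<psi> = genideal (free_ring n) G"
    by (rule finitely_presentedE[OF RDirProd_ring[OF A B] fp])
  have "(\<zero>\<^bsub>A\<^esub>, \<one>\<^bsub>B\<^esub>) \<in> \<psi> ` carrier (free_ring n)"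
    using \<psi>(2) ring.ring_simprules(2)[OF A] by (simp add: RDirProd_carrier)
  then obtain u where u: "(\<zero>\<^bsub>A\<^esub>, \<one>\<^bsub>B\<^esub>) = \<psi> u" "u \<in> carrier (free_ring n)"
    by (rule imageE)
  have "(fst \<circ> \<psi>) ` carrier (free_ring n) = fst ` (carrier A \<times> carrier B)"
    unfolding image_comp[symmetric] \<psi>(2) RDirProd_carrier ..
  moreover have "carrier B \<noteq> {}"
    using B.zero_closed by blast
  ultimately have surj: "(fst \<circ> \<psi>) ` carrier (free_ring n) = carrier A"
    by simp
  have "finitely_presented (A\<lparr>carrier := (fst \<circ> \<psi>) ` carrier (free_ring n)\<rparr>)"
  proof (rule finitely_presented_image[OF A ring_hom_trans[OF \<psi>(1) fst_ring_hom_RDirProd]])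
    show "a_kernel (free_ring n) A (fst \<circ> \<psi>) = genideal (free_ring n) (insert u G)"
      using u by (intro a_kernel_fst_comp[OF ring_free_ring A B \<psi>(1) _ _ G(2) \<psi>(3)]) simp_all
  qed (use G u(2) in simp_all)
  then show ?thesis
    unfolding surj by simp
qed

section \<open>Peirce decompositions\<close>

definition peirce_split :: "('a, 'b) ring_scheme \<Rightarrow> 'a set \<Rightarrow> 'a \<Rightarrow> bool" where
  "peirce_split R S e \<longleftrightarrow> subring S R \<and> e \<in> carrier R \<and> e \<otimes>\<^bsub>R\<^esub> e = e \<and>
     (\<forall>x \<in> carrier R. e \<otimes>\<^bsub>R\<^esub> x = x \<otimes>\<^bsub>R\<^esub> e) \<and>
     carrier R = {(s \<otimes>\<^bsub>R\<^esub> e) \<oplus>\<^bsub>R\<^esub> (t \<otimes>\<^bsub>R\<^esub> (\<one>\<^bsub>R\<^esub> \<ominus>\<^bsub>R\<^esub> e)) | s t. s \<in> S \<and> t \<in> S}"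

lemma peirce_split_RDirProd:
  assumes A: "ring A" and B: "ring B" and F: "ring F" and \<chi>: "\<chi> \<in> ring_hom F (RDirProd A B)"
    and surj: "(fst \<circ> \<chi>) ` carrier F = carrier A" "(snd \<circ> \<chi>) ` carrier F = carrier B"
  shows "peirce_split (RDirProd A B) (\<chi> ` carrier F) (\<one>\<^bsub>A\<^esub>, \<zero>\<^bsub>B\<^esub>)"
proof -
  let ?P = "RDirProd A B" and ?S = "\<chi> ` carrier F" and ?e = "(\<one>\<^bsub>A\<^esub>, \<zero>\<^bsub>B\<^esub>)"
  interpret A: ring A by (rule A)
  interpret B: ring B by (rule B)
  interpret P: ring ?P by (rule RDirProd_ring[OF A B])
  interpret \<chi>: ring_hom_ring F ?P \<chi> by (intro ring_hom_ringI2 F P.ring_axioms \<chi>)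
  have S: "?S \<subseteq> carrier ?P"
    by (rule image_subsetI) (rule \<chi>.hom_closed)
  have e: "?e \<in> carrier ?P" "\<one>\<^bsub>?P\<^esub> \<ominus>\<^bsub>?P\<^esub> ?e = (\<zero>\<^bsub>A\<^esub>, \<one>\<^bsub>B\<^esub>)"
    using RDirProd_a_minus[OF A B] by (simp_all add: RDirProd_simps RDirProd_carrier a_minus_def A.r_neg)
  have "carrier ?P \<subseteq> {(s \<otimes>\<^bsub>?P\<^esub> ?e) \<oplus>\<^bsub>?P\<^esub> (t \<otimes>\<^bsub>?P\<^esub> (\<one>\<^bsub>?P\<^esub> \<ominus>\<^bsub>?P\<^esub> ?e)) | s t. s \<in> ?S \<and> t \<in> ?S}"
  proof
    fix x assume "x \<in> carrier ?P"
    then have "fst x \<in> (fst \<circ> \<chi>) ` carrier F" "snd x \<in> (snd \<circ> \<chi>) ` carrier F"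
      using surj by (auto simp: RDirProd_carrier)
    then obtain f g where f: "f \<in> carrier F" "fst x = fst (\<chi> f)"
      and g: "g \<in> carrier F" "snd x = snd (\<chi> g)"
      by auto
    have "x = (\<chi> f \<otimes>\<^bsub>?P\<^esub> ?e) \<oplus>\<^bsub>?P\<^esub> (\<chi> g \<otimes>\<^bsub>?P\<^esub> (\<zero>\<^bsub>A\<^esub>, \<one>\<^bsub>B\<^esub>))"
      using f g \<chi>.hom_closed[OF f(1)] \<chi>.hom_closed[OF g(1)]
      by (cases x, cases "\<chi> f", cases "\<chi> g") (simp add: RDirProd_simps RDirProd_carrier)
    then show "x \<in> {(s \<otimes>\<^bsub>?P\<^esub> ?e) \<oplus>\<^bsub>?P\<^esub> (t \<otimes>\<^bsub>?P\<^esub> (\<one>\<^bsub>?P\<^esub> \<ominus>\<^bsub>?P\<^esub> ?e)) | s t. s \<in> ?S \<and> t \<in> ?S}"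
      unfolding e(2) using f(1) g(1) by blast
  qed
  moreover have "{(s \<otimes>\<^bsub>?P\<^esub> ?e) \<oplus>\<^bsub>?P\<^esub> (t \<otimes>\<^bsub>?P\<^esub> (\<one>\<^bsub>?P\<^esub> \<ominus>\<^bsub>?P\<^esub> ?e)) | s t. s \<in> ?S \<and> t \<in> ?S} \<subseteq> carrier ?P"
    using S e(1) by auto
  moreover have "\<forall>x \<in> carrier ?P. ?e \<otimes>\<^bsub>?P\<^esub> x = x \<otimes>\<^bsub>?P\<^esub> ?e"
    by (auto simp: RDirProd_simps RDirProd_carrier)
  ultimately show ?thesis
    unfolding peirce_split_def using e(1) \<chi>.img_is_subring[OF \<chi>.R.carrier_is_subring]
    by (simp add: RDirProd_simps)
qed

lemma peirce_split_ring_iso: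
  assumes P: "ring P" and R: "ring R" and h: "h \<in> ring_iso P R" and split: "peirce_split P S e"
  shows "peirce_split R (h ` S) (h e)"
proof -
  interpret P: ring P by (rule P)
  interpret R: ring R by (rule R)
  interpret h: ring_hom_ring P R h
    using h by (intro ring_hom_ringI2 P R) (simp add: ring_iso_def)
  have surj: "h ` carrier P = carrier R"
    using h by (simp add: ring_iso_def bij_betw_def)
  have S: "subring S P" and e: "e \<in> carrier P" "e \<otimes>\<^bsub>P\<^esub> e = e"
    and central: "\<forall>x \<in> carrier P. e \<otimes>\<^bsub>P\<^esub> x = x \<otimes>\<^bsub>P\<^esub> e"
    and decomposition: "carrier P = {(s \<otimes>\<^bsub>P\<^esub> e) \<oplus>\<^bsub>P\<^esub> (t \<otimes>\<^bsub>P\<^esub> (\<one>\<^bsub>P\<^esub> \<ominus>\<^bsub>P\<^esub> e)) | s t. s \<in> S \<and> t \<in> S}"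
    using split unfolding peirce_split_def by blast+
  have "h ((s \<otimes>\<^bsub>P\<^esub> e) \<oplus>\<^bsub>P\<^esub> (t \<otimes>\<^bsub>P\<^esub> (\<one>\<^bsub>P\<^esub> \<ominus>\<^bsub>P\<^esub> e)))
      = (h s \<otimes>\<^bsub>R\<^esub> h e) \<oplus>\<^bsub>R\<^esub> (h t \<otimes>\<^bsub>R\<^esub> (\<one>\<^bsub>R\<^esub> \<ominus>\<^bsub>R\<^esub> h e))"
    if "s \<in> S" "t \<in> S" for s t
    using that subringE(1)[OF S] e(1) by (simp add: a_minus_def subset_iff)
  then have "carrier R = {(s \<otimes>\<^bsub>R\<^esub> h e) \<oplus>\<^bsub>R\<^esub> (t \<otimes>\<^bsub>R\<^esub> (\<one>\<^bsub>R\<^esub> \<ominus>\<^bsub>R\<^esub> h e)) | s t. s \<in> h ` S \<and> t \<in> h ` S}"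
    unfolding surj[symmetric] by (subst decomposition) (rule image_setcompr2)
  moreover have "\<forall>x \<in> carrier R. h e \<otimes>\<^bsub>R\<^esub> x = x \<otimes>\<^bsub>R\<^esub> h e"
    unfolding surj[symmetric] using central e(1) by (auto simp flip: h.hom_mult)
  moreover have "h e \<in> carrier R" "h e \<otimes>\<^bsub>R\<^esub> h e = h e"
    using e by (simp_all flip: h.hom_mult)
  ultimately show ?thesis
    unfolding peirce_split_def using h.img_is_subring[OF S] by blast
qed

section \<open>The counterexample\<close>

definition mixed_relators :: "nat list set" where
  "mixed_relators = {[0, 2], [2, 0], [1, 2], [2, 1]}"

definition sandwich :: "nat \<Rightarrow> nat list" where
  "sandwich j = 0 # replicate j 1 @ [0]"

definition relators_A_upto :: "nat \<Rightarrow> nat list set" where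
  "relators_A_upto k = mixed_relators \<union> sandwich ` {..<k}"

definition ideal_A :: "(nat list \<Rightarrow> int) set" where
  "ideal_A = monomial_ideal 3 (\<Union>k. relators_A_upto k)"

definition ideal_B :: "(nat list \<Rightarrow> int) set" where
  "ideal_B = monomial_ideal 3 {[2]}"

lemma has_factor_singleton: "has_factor {[c]} w \<longleftrightarrow> c \<in> set w"
  unfolding has_factor_def by (auto dest: split_list)

(* Some two adjacent letters of such a word are exactly one 2, and they form a mixed relator. *)

lemma has_factor_mixed_relators:
  assumes "set w \<subseteq> {..<3}" "2 \<in> set w" "a \<in> set w" "a \<noteq> 2"
  shows "has_factor mixed_relators w"
  using assms
proof (induction w arbitrary: a)
  case Nil
  then show ?case by simp
next
  case (Cons c w)
  show ?case
  proof (cases w)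
    case Nil
    then show ?thesis using Cons.prems by auto
  next
    case (Cons d v)
    show ?thesis
    proof (cases "(c = 2) = (d = 2)")
      case True
      then have "2 \<in> set w \<and> (\<exists>a'. a' \<in> set w \<and> a' \<noteq> 2)"
        using Cons.prems \<open>w = d # v\<close> by auto
      then have "has_factor mixed_relators w"
        using Cons.IH Cons.prems(1) by auto
      then show ?thesis
        using has_factor_append(1)[of _ w "[c]"] by simp
    next
      case False
      then have "[c, d] \<in> mixed_relators"
        using Cons.prems(1) \<open>w = d # v\<close> by (auto simp: mixed_relators_def)
      then show ?thesis
        using has_factor_append(2)[OF has_factor_self, of "[c, d]" _ v] \<open>w = d # v\<close> by simp
    qed
  qed
qed

lemma ideal_A_Int_ideal_B: "ideal_A \<inter> ideal_B = monomial_ideal 3 mixed_relators"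
  unfolding ideal_A_def ideal_B_def
proof (rule monomial_ideal_Int)
  fix w :: "nat list" assume w: "set w \<subseteq> {..<3}"
  show "has_factor (\<Union>k. relators_A_upto k) w \<and> has_factor {[2]} w \<longleftrightarrow> has_factor mixed_relators w"
  proof
    assume H: "has_factor (\<Union>k. relators_A_upto k) w \<and> has_factor {[2]} w"
    then have "2 \<in> set w"
      by (simp add: has_factor_singleton)
    from H obtain p m s where "m \<in> (\<Union>k. relators_A_upto k)" "w = p @ m @ s"
      unfolding has_factor_def by blast
    then have m: "m \<in> mixed_relators \<union> range sandwich" "w = p @ m @ s"
      by (auto simp: relators_A_upto_def)
    show "has_factor mixed_relators w"
    proof (cases "m \<in> mixed_relators")
      case True
      then show ?thesis using m(2) by (auto simp: has_factor_def)
    next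
      case False
      then have "0 \<in> set w" using m by (auto simp: sandwich_def)
      then show ?thesis by (rule has_factor_mixed_relators[OF w \<open>2 \<in> set w\<close>]) simp
    qed
  next
    assume "has_factor mixed_relators w"
    moreover have "mixed_relators \<subseteq> (\<Union>k. relators_A_upto k)"
      by (auto simp: relators_A_upto_def)
    moreover have "2 \<in> set m" if "m \<in> mixed_relators" for m
      using that by (auto simp: mixed_relators_def)
    ultimately show "has_factor (\<Union>k. relators_A_upto k) w \<and> has_factor {[2]} w"
      by (auto simp: has_factor_singleton intro: has_factor_mono) (auto simp: has_factor_def)
  qed
qed

lemma sandwich_factor:
  assumes "sandwich k = p @ sandwich j @ s"
  shows "j = k"
proof -
  have "length (filter ((=) 0) (sandwich i)) = 2" for i
    by (simp add: sandwich_def)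
  then have "filter ((=) 0) p = []" "filter ((=) 0) s = []"
    using arg_cong[OF assms, of "\<lambda>w. length (filter ((=) 0) w)"] by simp_all
  then have no_zero: "0 \<notin> set p" "0 \<notin> set s"
    by (auto simp: filter_empty_conv)
  have "p = []"
  proof (rule ccontr)
    assume "p \<noteq> []"
    then have "hd p = 0"
      using arg_cong[OF assms, of hd] by (simp add: sandwich_def)
    then show False using \<open>p \<noteq> []\<close> hd_in_set no_zero(1) by metis
  qed
  moreover have "s = []"
  proof (rule ccontr)
    assume "s \<noteq> []"
    then have "last s = 0"
      using arg_cong[OF assms, of last] by (simp add: sandwich_def)
    then show False using \<open>s \<noteq> []\<close> last_in_set no_zero(2) by metis
  qed
  ultimately show ?thesis
    using assms by (simp add: sandwich_def)
qed

lemma sandwich_not_in_relators_A_upto: "\<not> has_factor (relators_A_upto k) (sandwich k)"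
proof
  assume "has_factor (relators_A_upto k) (sandwich k)"
  then obtain p m s where m: "m \<in> relators_A_upto k" "sandwich k = p @ m @ s"
    by (auto simp: has_factor_def)
  show False
  proof (cases "m \<in> mixed_relators")
    case True
    then have "2 \<in> set (sandwich k)" using m(2) by (auto simp: mixed_relators_def)
    then show False by (simp add: sandwich_def)
  next
    case False
    then obtain j where "j < k" "m = sandwich j" using m(1) by (auto simp: relators_A_upto_def)
    then show False using sandwich_factor m(2) by blast
  qed
qed

lemma ideal_ideal_A: "ideal ideal_A (free_ring 3)"
  unfolding ideal_A_def by (rule ideal_monomial_ideal)

lemma ideal_ideal_B: "ideal ideal_B (free_ring 3)"
  unfolding ideal_B_def by (rule ideal_monomial_ideal)

lemma not_finitely_presented_quotient_A: "\<not> finitely_presented (free_ring 3 Quot ideal_A)"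
proof (rule not_finitely_presented_chain)
  interpret I: ideal ideal_A "free_ring 3" by (rule ideal_ideal_A)
  show "ring (free_ring 3 Quot ideal_A)" by (rule I.quotient_is_ring)
  show "(+>\<^bsub>free_ring 3\<^esub>) ideal_A \<in> ring_hom (free_ring 3) (free_ring 3 Quot ideal_A)"
    by (rule I.rcos_ring_hom)
  show "(+>\<^bsub>free_ring 3\<^esub>) ideal_A ` carrier (free_ring 3) = carrier (free_ring 3 Quot ideal_A)"
    by (rule I.rcos_ring_hom_surj)
  show "ideal (monomial_ideal 3 (relators_A_upto k)) (free_ring 3)" for k
    by (rule ideal_monomial_ideal)
  have mono: "mono relators_A_upto"
    by (auto simp: mono_def relators_A_upto_def)
  then show "mono (\<lambda>k. monomial_ideal 3 (relators_A_upto k))"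
    unfolding mono_def using monomial_ideal_mono by blast
  show "a_kernel (free_ring 3) (free_ring 3 Quot ideal_A) ((+>\<^bsub>free_ring 3\<^esub>) ideal_A) =
      (\<Union>k. monomial_ideal 3 (relators_A_upto k))"
    unfolding I.a_kernel_rcos_ring_hom unfolding ideal_A_def by (rule monomial_ideal_UN[OF mono])
  show "monomial_ideal 3 (relators_A_upto k) \<noteq> (\<Union>k. monomial_ideal 3 (relators_A_upto k))" for k
  proof -
    have "set (sandwich k) \<subseteq> {..<3}"
      by (auto simp: sandwich_def)
    moreover have "sandwich k \<in> relators_A_upto (Suc k)"
      by (simp add: relators_A_upto_def)
    ultimately have "monomial (sandwich k) \<in> monomial_ideal 3 (relators_A_upto (Suc k))"
      by (rule monomial_in_monomial_ideal[rotated])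
    moreover have "monomial (sandwich k) \<notin> monomial_ideal 3 (relators_A_upto k)"
      using sandwich_not_in_relators_A_upto[of k] by (simp add: monomial_ideal_def monomial_def)
    ultimately show ?thesis by blast
  qed
qed

abbreviation prod_AB :: "((nat list \<Rightarrow> int) set \<times> (nat list \<Rightarrow> int) set) ring" where
  "prod_AB \<equiv> RDirProd (free_ring 3 Quot ideal_A) (free_ring 3 Quot ideal_B)"

definition diag :: "(nat list \<Rightarrow> int) \<Rightarrow> (nat list \<Rightarrow> int) set \<times> (nat list \<Rightarrow> int) set" where
  "diag a = (ideal_A +>\<^bsub>free_ring 3\<^esub> a, ideal_B +>\<^bsub>free_ring 3\<^esub> a)"

lemma ring_prod_AB: "ring prod_AB"
  by (intro RDirProd_ring ideal.quotient_is_ring ideal_ideal_A ideal_ideal_B)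

lemma diag_ring_hom: "diag \<in> ring_hom (free_ring 3) prod_AB"
  unfolding diag_def[abs_def]
  by (rule ring.canonical_proj_is_hom[OF ring_free_ring ideal_ideal_A ideal_ideal_B])

lemma peirce_split_prod_AB:
  "peirce_split prod_AB (diag ` carrier (free_ring 3)) (\<one>\<^bsub>free_ring 3 Quot ideal_A\<^esub>, \<zero>\<^bsub>free_ring 3 Quot ideal_B\<^esub>)"
proof (rule peirce_split_RDirProd[OF _ _ ring_free_ring diag_ring_hom])
  interpret A: ideal ideal_A "free_ring 3" by (rule ideal_ideal_A)
  interpret B: ideal ideal_B "free_ring 3" by (rule ideal_ideal_B)
  show "ring (free_ring 3 Quot ideal_A)" "ring (free_ring 3 Quot ideal_B)"
    by (rule A.quotient_is_ring, rule B.quotient_is_ring)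
  show "(fst \<circ> diag) ` carrier (free_ring 3) = carrier (free_ring 3 Quot ideal_A)"
    using A.rcos_ring_hom_surj by (simp add: comp_def diag_def)
  show "(snd \<circ> diag) ` carrier (free_ring 3) = carrier (free_ring 3 Quot ideal_B)"
    using B.rcos_ring_hom_surj by (simp add: comp_def diag_def)
qed

lemma finitely_presented_diag_image:
  "finitely_presented (prod_AB\<lparr>carrier := diag ` carrier (free_ring 3)\<rparr>)"
proof (rule finitely_presented_image[OF ring_prod_AB diag_ring_hom])
  have "set m \<subseteq> {..<3}" if "m \<in> mixed_relators" for m
    using that by (auto simp: mixed_relators_def)
  then show "monomial ` mixed_relators \<subseteq> carrier (free_ring 3)"
    by (auto intro: monomial_closed)
  show "a_kernel (free_ring 3) prod_AB diag = genideal (free_ring 3) (monomial ` mixed_relators)"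
    unfolding diag_def[abs_def] ring.canonical_proj_ker[OF ring_free_ring ideal_ideal_A ideal_ideal_B]
      ideal_A_Int_ideal_B
    by (rule genideal_monomials[symmetric]) fact
qed (simp add: mixed_relators_def)

lemma not_finitely_presented_prod_AB: "\<not> finitely_presented prod_AB"
  using finitely_presented_RDirProd_fst not_finitely_presented_quotient_A
    ideal.quotient_is_ring ideal_ideal_A ideal_ideal_B by blast

lemma countable_carrier_prod_AB: "countable (carrier prod_AB)"
proof -
  have "countable (carrier (free_ring 3 Quot I))" if "ideal I (free_ring 3)" for I
    using ideal.rcos_ring_hom_surj[OF that] countable_carrier_free_ring
    by (metis countable_image)
  then show ?thesis
    by (simp add: RDirProd_carrier ideal_ideal_A ideal_ideal_B)
qed

theorem lemma4p1:
  shows "\<exists>(R :: nat ring) S e.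
           ring R \<and> subring S R \<and>
           e \<in> carrier R \<and> e \<otimes>\<^bsub>R\<^esub> e = e \<and>
           (\<forall>x \<in> carrier R. e \<otimes>\<^bsub>R\<^esub> x = x \<otimes>\<^bsub>R\<^esub> e) \<and>
           carrier R = {(s \<otimes>\<^bsub>R\<^esub> e) \<oplus>\<^bsub>R\<^esub> (t \<otimes>\<^bsub>R\<^esub> (\<one>\<^bsub>R\<^esub> \<ominus>\<^bsub>R\<^esub> e)) | s t. s \<in> S \<and> t \<in> S} \<and>
           finitely_presented (R\<lparr>carrier := S\<rparr>) \<and>
           \<not> finitely_presented R"
proof -
  let ?S = "diag ` carrier (free_ring 3)"
  let ?e = "(\<one>\<^bsub>free_ring 3 Quot ideal_A\<^esub>, \<zero>\<^bsub>free_ring 3 Quot ideal_B\<^esub>)"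
  obtain g :: "_ \<Rightarrow> nat" where g: "inj_on g (carrier prod_AB)"
    using countable_carrier_prod_AB by (rule countableE)
  let ?R = "image_ring g prod_AB"
  have iso: "g \<in> ring_iso prod_AB ?R"
    by (rule inj_imp_image_ring_iso[OF g])
  have R: "ring ?R"
    by (rule ring.inj_imp_image_ring_is_ring[OF ring_prod_AB g])
  have "peirce_split ?R (g ` ?S) (g ?e)"
    by (rule peirce_split_ring_iso[OF ring_prod_AB R iso peirce_split_prod_AB])
  moreover have "finitely_presented (?R\<lparr>carrier := g ` ?S\<rparr>)"
    using peirce_split_prod_AB unfolding peirce_split_def
    by (intro finitely_presented_subring_iso[OF ring_prod_AB iso _ finitely_presented_diag_image]) blast
  moreover have "\<not> finitely_presented ?R"
    using finitely_presented_iso[OF R ring_iso_sym[OF ring_prod_AB]] iso not_finitely_presented_prod_AB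
    unfolding is_ring_iso_def by blast
  ultimately show ?thesis
    using R unfolding peirce_split_def by blast
qed

end
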